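(* Let $\Gamma=(V,E)$ be a finite connected graph and $\phi:V\to\mathbb{C}$ a solution of equation (1) with $\gamma:V\to\mathbb{R}$ satisfying $\gamma(x)<1$ for all $x\in V$. Let $n_0$ be the smallest vertex degree of $\Gamma$. Then for every $N>n_0$ there is no invariant embedded framework in $\mathbb{R}^N$ with underlying graph $\Gamma$, positions $x\mapsto\vec x$, invariance function $\gamma$, and $\phi(x)=P(\vec x)$ for all $x\in V$.
   Context: Equation (1) at a vertex $x$ of degree $n(x)$: $\frac{\gamma(x)}{n(x)}\big(\sum_{y\sim x}(\phi(y)-\phi(x))\big)^2=\sum_{y\sim x}(\phi(x)-\phi(y))^2$. A framework in $\mathbb{R}^N$ is a finite simple graph with a point $\vec x\in\mathbb{R}^N$ assigned to each vertex, edges being straight segments; it is embedded if distinct vertices have distinct positions and no two edges meet except at common endpoints. With $P(y_1,\dots,y_N)=y_1+iy_2$, the framework is invariant with invariance function $\gamma:V\to\mathbb{R}$ if for every orthogonal transformation $A$ of $\mathbb{R}^N$ the function $x\mapsto P(A\vec x)$ satisfies equation (1) at every vertex with this $\gamma$. *)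

theory Defs
  imports "HOL-Analysis.Analysis"
begin

definition simple_graph :: "'a set \<Rightarrow> ('a \<Rightarrow> 'a \<Rightarrow> bool) \<Rightarrow> bool" where
  "simple_graph V E \<longleftrightarrow> finite V \<and> (\<forall>x y. E x y \<longrightarrow> x \<in> V \<and> y \<in> V \<and> x \<noteq> y \<and> E y x)"

definition graph_connected :: "'a set \<Rightarrow> ('a \<Rightarrow> 'a \<Rightarrow> bool) \<Rightarrow> bool" where
  "graph_connected V E \<longleftrightarrow> V \<noteq> {} \<and> (\<forall>x\<in>V. \<forall>y\<in>V. E\<^sup>*\<^sup>* x y)"

definition nbrs :: "'a set \<Rightarrow> ('a \<Rightarrow> 'a \<Rightarrow> bool) \<Rightarrow> 'a \<Rightarrow> 'a set" where
  "nbrs V E x = {y \<in> V. E x y}"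

definition deg :: "'a set \<Rightarrow> ('a \<Rightarrow> 'a \<Rightarrow> bool) \<Rightarrow> 'a \<Rightarrow> nat" where
  "deg V E x = card (nbrs V E x)"

definition min_degree :: "'a set \<Rightarrow> ('a \<Rightarrow> 'a \<Rightarrow> bool) \<Rightarrow> nat" where
  "min_degree V E = Min (deg V E ` V)"

definition eq1 :: "'a set \<Rightarrow> ('a \<Rightarrow> 'a \<Rightarrow> bool) \<Rightarrow> ('a \<Rightarrow> real) \<Rightarrow> ('a \<Rightarrow> complex) \<Rightarrow> 'a \<Rightarrow> bool" where
  "eq1 V E \<gamma> \<phi> x \<longleftrightarrow>
     complex_of_real (\<gamma> x / real (deg V E x)) * (\<Sum>y\<in>nbrs V E x. \<phi> y - \<phi> x)^2
     = (\<Sum>y\<in>nbrs V E x. (\<phi> x - \<phi> y)^2)"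

text \<open>Coordinates of R^N: the index type is linearly ordered; coordinate k (0-based)
  is the k-th smallest index. P(y) = y_1 + i y_2.\<close>
definition coord_idx :: "nat \<Rightarrow> 'n::{finite,linorder}" where
  "coord_idx k = sorted_list_of_set (UNIV :: 'n set) ! k"

definition Pmap :: "real^'n::{finite,linorder} \<Rightarrow> complex" where
  "Pmap y = Complex (y $ coord_idx 0) (y $ coord_idx 1)"

definition embedded_framework ::
  "'a set \<Rightarrow> ('a \<Rightarrow> 'a \<Rightarrow> bool) \<Rightarrow> ('a \<Rightarrow> real^'n) \<Rightarrow> bool" where
  "embedded_framework V E pos \<longleftrightarrow> inj_on pos V \<and>
     (\<forall>x y u v. E x y \<and> E u v \<and> {x, y} \<noteq> {u, v} \<longrightarrow>
        closed_segment (pos x) (pos y) \<inter> closed_segment (pos u) (pos v)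
          \<subseteq> pos ` ({x, y} \<inter> {u, v}))"

definition invariant_framework ::
  "'a set \<Rightarrow> ('a \<Rightarrow> 'a \<Rightarrow> bool) \<Rightarrow> ('a \<Rightarrow> real) \<Rightarrow> ('a \<Rightarrow> (real,'n::{finite,linorder}) vec) \<Rightarrow> bool" where
  "invariant_framework V E \<gamma> pos \<longleftrightarrow>
     (\<forall>A :: (real,'n::{finite,linorder}) vec \<Rightarrow> (real,'n) vec. orthogonal_transformation A \<longrightarrow>
        (\<forall>x\<in>V. eq1 V E \<gamma> (\<lambda>z. Pmap (A (pos z))) x))"

end

theory Submission
  imports Defs
begin

(* Suppose an invariant embedded framework pos realises phi.  Take a
   vertex x0 of minimal degree n0 and its neighbours S.  The edge vectors pos y - pos x0
   (y in S) span a subspace of dimension at most n0 < N, so there is a unit vector u2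
   orthogonal to all of them; let u1 be the direction of one (nonzero) edge vector.  An
   orthogonal map A sending u1, u2 to the first two coordinate axes makes every difference
   P(A pos y) - P(A pos x0) real, and not all of them vanish.  But equation (1) with
   gamma < 1 has no such solution: for real differences a_y it reads
   gamma/n (sum a_y)^2 = sum a_y^2, contradicting Cauchy-Schwarz. *)

text \<open>Cauchy-Schwarz: \<open>(\<Sum>a)\<^sup>2 \<le> n \<Sum>a\<^sup>2\<close>, so \<open>g/n (\<Sum>a)\<^sup>2\<close> stays strictly below \<open>\<Sum>a\<^sup>2\<close>
  when \<open>g < 1\<close> and some \<open>a\<close> is nonzero.\<close>
lemma scaled_square_sum_less_sum_squares:
  fixes a :: "'b \<Rightarrow> real" and g :: real
  assumes "finite S" "y0 \<in> S" "a y0 \<noteq> 0" "g < 1"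
  shows "g / card S * (\<Sum>y\<in>S. a y)\<^sup>2 < (\<Sum>y\<in>S. (a y)\<^sup>2)"
proof -
  define n where "n = real (card S)"
  have n_pos: "n > 0" using assms(1,2) by (auto simp: n_def card_gt_0_iff)
  have "0 < (a y0)\<^sup>2" using assms(3) by simp
  also have "\<dots> \<le> (\<Sum>y\<in>S. (a y)\<^sup>2)" using assms(1,2) by (intro member_le_sum) auto
  finally have squares_pos: "(\<Sum>y\<in>S. (a y)\<^sup>2) > 0" .
  have cauchy_schwarz: "(\<Sum>y\<in>S. a y)\<^sup>2 \<le> n * (\<Sum>y\<in>S. (a y)\<^sup>2)"
    using sum_squared_le_sum_of_squares[of a S] by (simp add: n_def mult.commute)
  show ?thesis
  proof (cases "g \<le> 0")
    case True
    then have "g / n * (\<Sum>y\<in>S. a y)\<^sup>2 \<le> 0"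
      using n_pos by (simp add: mult_nonpos_nonneg divide_nonpos_pos)
    then show ?thesis using squares_pos by (simp add: n_def)
  next
    case False
    have "g / n * (\<Sum>y\<in>S. a y)\<^sup>2 \<le> g / n * (n * (\<Sum>y\<in>S. (a y)\<^sup>2))"
      using False n_pos cauchy_schwarz by (intro mult_left_mono) auto
    also have "\<dots> = g * (\<Sum>y\<in>S. (a y)\<^sup>2)" using n_pos by simp
    also have "\<dots> < (\<Sum>y\<in>S. (a y)\<^sup>2)" using squares_pos assms(4) by simp
    finally show ?thesis by (simp add: n_def)
  qed
qed

lemma eq1_fails_for_real_differences:
  assumes "finite (nbrs V E x)" "y0 \<in> nbrs V E x" "\<phi> y0 \<noteq> \<phi> x"
    and "\<forall>y\<in>nbrs V E x. Im (\<phi> y - \<phi> x) = 0" "\<gamma> x < 1"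
  shows "\<not> eq1 V E \<gamma> \<phi> x"
proof
  assume eq: "eq1 V E \<gamma> \<phi> x"
  define S where "S = nbrs V E x"
  define a where "a y = Re (\<phi> y - \<phi> x)" for y
  have real_diff: "\<phi> y - \<phi> x = complex_of_real (a y)" if "y \<in> S" for y
    using assms(4) that by (simp add: S_def a_def complex_eq_iff)
  have sum_diffs: "(\<Sum>y\<in>S. \<phi> y - \<phi> x) = complex_of_real (\<Sum>y\<in>S. a y)"
    using real_diff by simp
  have "(\<phi> x - \<phi> y)\<^sup>2 = complex_of_real ((a y)\<^sup>2)" if "y \<in> S" for y
    using real_diff[OF that] by (simp add: power2_commute[of "\<phi> x"])
  then have sum_squares: "(\<Sum>y\<in>S. (\<phi> x - \<phi> y)\<^sup>2) = complex_of_real (\<Sum>y\<in>S. (a y)\<^sup>2)"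
    by simp
  have "complex_of_real (\<gamma> x / card S * (\<Sum>y\<in>S. a y)\<^sup>2)
        = complex_of_real (\<Sum>y\<in>S. (a y)\<^sup>2)"
    using eq unfolding eq1_def deg_def S_def[symmetric] sum_diffs sum_squares by simp
  then have "\<gamma> x / card S * (\<Sum>y\<in>S. a y)\<^sup>2 = (\<Sum>y\<in>S. (a y)\<^sup>2)"
    by (rule of_real_eq_iff[THEN iffD1])
  moreover have "a y0 \<noteq> 0" using real_diff[of y0] assms(2,3) by (auto simp: S_def)
  ultimately show False
    using scaled_square_sum_less_sum_squares[of S y0 a "\<gamma> x"] assms(1,2,5) by (simp add: S_def)
qed

lemma reflection_orthogonal_transformation:
  fixes w :: "'b::real_inner"
  assumes "w \<noteq> 0"
  shows "orthogonal_transformation (\<lambda>x. x - (2 * (x \<bullet> w) / (w \<bullet> w)) *\<^sub>R w)"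
proof -
  have "w \<bullet> w \<noteq> 0" using assms by simp
  have "linear (\<lambda>x. x - (2 * (x \<bullet> w) / (w \<bullet> w)) *\<^sub>R w)"
    by (intro linearI) (auto simp: algebra_simps inner_add_left add_divide_distrib
        scaleR_add_left diff_divide_distrib)
  moreover have "(v - (2 * (v \<bullet> w) / (w \<bullet> w)) *\<^sub>R w) \<bullet> (u - (2 * (u \<bullet> w) / (w \<bullet> w)) *\<^sub>R w)
                 = v \<bullet> u" for v u
    using \<open>w \<bullet> w \<noteq> 0\<close>
    by (simp add: inner_diff_left inner_diff_right inner_commute field_simps power2_eq_square)
  ultimately show ?thesis unfolding orthogonal_transformation_def by blast
qed

text \<open>Any orthonormal pair can be moved onto any other orthonormal pair: first move \<open>u2\<close>
  to \<open>e2\<close>, then reflect the image of \<open>u1\<close> onto \<open>e1\<close> in a hyperplane containing \<open>e2\<close>.\<close>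
lemma orthonormal_pair_transport:
  fixes u1 u2 e1 e2 :: "real^'n"
  assumes "norm u1 = 1" "norm u2 = 1" "u1 \<bullet> u2 = 0"
    and "norm e1 = 1" "norm e2 = 1" "e1 \<bullet> e2 = 0"
  obtains h where "orthogonal_transformation h" "h u1 = e1" "h u2 = e2"
proof -
  obtain f where f: "orthogonal_transformation f" "f u2 = e2"
    using orthogonal_transformation_exists[of u2 e2] assms by metis
  define p where "p = f u1"
  have p_unit: "p \<bullet> p = 1"
    using f(1) assms(1) unfolding p_def orthogonal_transformation_def by (simp add: norm_eq_1)
  have p_e2: "p \<bullet> e2 = 0" using f assms(3) unfolding p_def orthogonal_transformation_def by metis
  show ?thesis
  proof (cases "p = e1")
    case True
    then show ?thesis using that f p_def by blast
  next
    case False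
    define w where "w = p - e1"
    define g where "g x = x - (2 * (x \<bullet> w) / (w \<bullet> w)) *\<^sub>R w" for x
    have g: "orthogonal_transformation g"
      unfolding g_def using False by (intro reflection_orthogonal_transformation) (simp add: w_def)
    have e1_unit: "e1 \<bullet> e1 = 1" using assms(4) by (simp add: norm_eq_1)
    have "w \<bullet> w \<noteq> 0" using False by (simp add: w_def)
    moreover have "w \<bullet> w = 2 * (p \<bullet> w)"
      using p_unit e1_unit by (simp add: w_def inner_diff_left inner_diff_right inner_commute)
    ultimately have coeff_one: "2 * (p \<bullet> w) / (w \<bullet> w) = 1" by (metis divide_self)
    have "g p = p - w" by (simp only: g_def coeff_one scaleR_one)
    then have "g p = e1" by (simp add: w_def)
    moreover have "g e2 = e2"
      using p_e2 assms(6) by (simp add: g_def w_def inner_diff_right inner_commute)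
    ultimately show ?thesis
      using that[of "g \<circ> f"] orthogonal_transformation_compose[OF g f(1)] f(2) p_def by simp
  qed
qed

lemma Pmap_diff: "Pmap (a - b) = Pmap a - Pmap b"
  by (simp add: Pmap_def complex_eq_iff)

lemma Pmap_inner_axes:
  "Pmap y = Complex (y \<bullet> axis (coord_idx 0) 1) (y \<bullet> axis (coord_idx 1) 1)"
  by (simp add: Pmap_def inner_axis)

lemma coord_idx_0_neq_1:
  assumes "CARD('n::{finite,linorder}) \<ge> 2"
  shows "coord_idx 0 \<noteq> (coord_idx 1 :: 'n)"
  using assms unfolding coord_idx_def by (simp add: nth_eq_iff_index_eq)

text \<open>Send the direction of \<open>w0\<close> to the first axis and a unit normal of the span to the second.\<close>
lemma flattening_transformation:
  fixes W :: "(real^'n::{finite,linorder}) set"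
  assumes "dim W < CARD('n::{finite,linorder})" "w0 \<in> W" "w0 \<noteq> 0"
  obtains h :: "real^'n::{finite,linorder} \<Rightarrow> real^'n::{finite,linorder}" where "orthogonal_transformation h"
    "\<forall>w\<in>W. Im (Pmap (h w)) = 0" "Pmap (h w0) \<noteq> 0"
proof -
  obtain u where u: "u \<noteq> 0" "\<And>z. z \<in> span W \<Longrightarrow> orthogonal u z"
    using orthogonal_to_subspace_exists[of W] assms(1) by auto
  define u1 where "u1 = w0 /\<^sub>R norm w0"
  define u2 where "u2 = u /\<^sub>R norm u"
  have normal: "w \<bullet> u2 = 0" if "w \<in> W" for w
    using u(2)[of w] that by (auto simp: u2_def orthogonal_def inner_commute span_base)
  have "1 \<le> dim W" using assms(2,3) dim_eq_0[of W] by fastforce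
  then have "coord_idx 0 \<noteq> (coord_idx 1 :: 'n)"
    using assms(1) by (intro coord_idx_0_neq_1) linarith
  then obtain h :: "real^'n::{finite,linorder} \<Rightarrow> real^'n::{finite,linorder}" where h: "orthogonal_transformation h"
    "h u1 = axis (coord_idx 0) 1" "h u2 = axis (coord_idx 1) 1"
    using orthonormal_pair_transport[of u1 u2 "axis (coord_idx 0) 1" "axis (coord_idx 1) 1"]
      u(1) assms(3) normal[OF assms(2)]
    by (auto simp: u1_def u2_def inner_axis_axis)
  have preserves_inner: "h v \<bullet> h v' = v \<bullet> v'" for v v'
    using h(1) unfolding orthogonal_transformation_def by blast
  have P_h: "Pmap (h w) = Complex (w \<bullet> u1) (w \<bullet> u2)" for w
    using preserves_inner[of w u1] preserves_inner[of w u2] h(2,3)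
    by (simp add: Pmap_inner_axes)
  have "\<forall>w\<in>W. Im (Pmap (h w)) = 0" using normal by (simp add: P_h)
  moreover have "Pmap (h w0) \<noteq> 0" using assms(3) by (simp add: P_h u1_def complex_eq_iff)
  ultimately show ?thesis using that h(1) by blast
qed

lemma min_degree_vertex_with_neighbour:
  assumes "simple_graph V E" "V \<noteq> {}" "\<forall>x\<in>V. deg V E x > 0"
  obtains x0 y0 where "x0 \<in> V" "deg V E x0 = min_degree V E"
    "finite (nbrs V E x0)" "y0 \<in> nbrs V E x0" "y0 \<in> V" "y0 \<noteq> x0"
proof -
  have "finite V" using assms(1) by (simp add: simple_graph_def)
  then have "min_degree V E \<in> deg V E ` V"
    unfolding min_degree_def using assms(2) by (intro Min_in) auto
  then obtain x0 where x0: "x0 \<in> V" "deg V E x0 = min_degree V E" by auto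
  have fin: "finite (nbrs V E x0)" using \<open>finite V\<close> by (simp add: nbrs_def)
  moreover have "card (nbrs V E x0) > 0" using assms(3) x0(1) by (simp add: deg_def)
  then obtain y0 where y0: "y0 \<in> nbrs V E x0" by (auto simp: card_gt_0_iff)
  moreover have "y0 \<in> V" "y0 \<noteq> x0"
    using y0 assms(1) by (auto simp: nbrs_def simple_graph_def)
  ultimately show ?thesis using that x0 by blast
qed

lemma low_degree_vertex_breaks_invariance:
  fixes pos :: "'a \<Rightarrow> real^'n::{finite,linorder}"
  assumes "finite (nbrs V E x0)" "y0 \<in> nbrs V E x0" "pos y0 \<noteq> pos x0"
    and "deg V E x0 < CARD('n::{finite,linorder})" "\<gamma> x0 < 1"
  obtains A :: "real^'n::{finite,linorder} \<Rightarrow> real^'n::{finite,linorder}"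
  where "orthogonal_transformation A" "\<not> eq1 V E \<gamma> (\<lambda>z. Pmap (A (pos z))) x0"
proof -
  define S where "S = nbrs V E x0"
  define W where "W = (\<lambda>y. pos y - pos x0) ` S"
  have "dim W \<le> card W" using assms(1) by (intro dim_le_card') (simp add: W_def S_def)
  also have "\<dots> \<le> card S" unfolding W_def S_def using assms(1) by (rule card_image_le)
  also have "\<dots> < CARD('n::{finite,linorder})" using assms(4) by (simp add: S_def deg_def)
  finally have dim_W: "dim W < CARD('n::{finite,linorder})" .
  have "pos y0 - pos x0 \<in> W" using assms(2) by (simp add: W_def S_def)
  moreover have "pos y0 - pos x0 \<noteq> 0" using assms(3) by simp
  ultimately obtain h :: "real^'n::{finite,linorder} \<Rightarrow> real^'n::{finite,linorder}"
    where h: "orthogonal_transformation h"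
      "\<forall>w\<in>W. Im (Pmap (h w)) = 0" "Pmap (h (pos y0 - pos x0)) \<noteq> 0"
    using flattening_transformation[OF dim_W] by blast
  have diff: "Pmap (h (pos y)) - Pmap (h (pos x0)) = Pmap (h (pos y - pos x0))" for y
    using h(1) by (simp add: orthogonal_transformation_linear linear_diff Pmap_diff)
  have "\<not> eq1 V E \<gamma> (\<lambda>z. Pmap (h (pos z))) x0"
  proof (rule eq1_fails_for_real_differences)
    show "finite (nbrs V E x0)" "y0 \<in> nbrs V E x0" "\<gamma> x0 < 1" by (fact assms(1,2,5))+
    show "Pmap (h (pos y0)) \<noteq> Pmap (h (pos x0))" using h(3) unfolding diff[symmetric] by simp
    show "\<forall>y\<in>nbrs V E x0. Im (Pmap (h (pos y)) - Pmap (h (pos x0))) = 0"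
      using h(2) by (simp add: diff W_def S_def)
  qed
  then show ?thesis using that h(1) by blast
qed

theorem lemma5p5:
  fixes V :: "'a set" and E :: "'a \<Rightarrow> 'a \<Rightarrow> bool"
    and \<phi> :: "'a \<Rightarrow> complex" and \<gamma> :: "'a \<Rightarrow> real"
  assumes "simple_graph V E"
    and "graph_connected V E"
    and "\<forall>x\<in>V. deg V E x > 0"
    and "\<forall>x\<in>V. eq1 V E \<gamma> \<phi> x"
    and "\<forall>x\<in>V. \<gamma> x < 1"
    and "CARD('n) > min_degree V E"
  shows "\<not> (\<exists>pos :: 'a \<Rightarrow> real^'n::{finite,linorder}.
             embedded_framework V E pos \<and> invariant_framework V E \<gamma> pos
             \<and> (\<forall>x\<in>V. \<phi> x = Pmap (pos x)))"
proof
  assume "\<exists>pos :: 'a \<Rightarrow> real^'n::{finite,linorder}.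
             embedded_framework V E pos \<and> invariant_framework V E \<gamma> pos
             \<and> (\<forall>x\<in>V. \<phi> x = Pmap (pos x))"
  then obtain pos :: "'a \<Rightarrow> real^'n::{finite,linorder}"
    where emb: "embedded_framework V E pos" and inv: "invariant_framework V E \<gamma> pos"
    by blast
  have inj: "inj_on pos V" using emb unfolding embedded_framework_def by (rule conjunct1)
  have "V \<noteq> {}" using assms(2) by (simp add: graph_connected_def)
  then obtain x0 y0 where x0: "x0 \<in> V" "deg V E x0 = min_degree V E"
    and y0: "finite (nbrs V E x0)" "y0 \<in> nbrs V E x0" "y0 \<in> V" "y0 \<noteq> x0"
    using min_degree_vertex_with_neighbour[OF assms(1) _ assms(3)] by blast
  have distinct: "pos y0 \<noteq> pos x0" using inj x0(1) y0(3,4) by (auto dest: inj_onD)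
  have low_degree: "deg V E x0 < CARD('n::{finite,linorder})" using assms(6) x0(2) by simp
  obtain A :: "real^'n::{finite,linorder} \<Rightarrow> real^'n::{finite,linorder}"
    where "orthogonal_transformation A" "\<not> eq1 V E \<gamma> (\<lambda>z. Pmap (A (pos z))) x0"
    using low_degree_vertex_breaks_invariance[OF y0(1,2) distinct low_degree] assms(5) x0(1)
    by blast
  then show False using inv x0(1) unfolding invariant_framework_def by blast
qed

end
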